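(* Let $\Omega>0$, let $0<\sigma\leq m_{\min}$, let $n\geq 2$ be an integer and set \[ \tau=\frac{e^{-1}}{\Omega}\Big(\frac{\sigma}{m_{\min}}\Big)^{\frac{1}{2n-1}}. \] Then there exist a positive discrete measure $\mu=\sum_{j=1}^{n}a_j \delta_{y_j}$ (all $a_j>0$) whose $n$ supports are the points $-(n-\tfrac12)\tau+2k\tau$, $k=0,1,\dots,n-1$ (i.e. $-(n-\frac{1}{2})\tau, -(n-\frac{5}{2})\tau, \dots, (n-\frac{3}{2})\tau$), and a positive discrete measure $\hat \mu=\sum_{j=1}^{n}\hat a_j \delta_{\hat y_j}$ (all $\hat a_j>0$) whose $n$ supports are the points $-(n-\tfrac32)\tau+2k\tau$, $k=0,1,\dots,n-1$ (i.e. $-(n-\frac{3}{2})\tau, -(n-\frac{7}{2})\tau,\dots, (n-\frac{1}{2})\tau$), such that \[ \max_{\omega\in[-\Omega,\Omega]}\big|\mathcal F[\hat \mu](\omega)- \mathcal F[\mu](\omega)\big|< \sigma, \qquad \min_{1\leq j\leq n}|a_j|= m_{\min}. \]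
   Context: For a discrete measure $\nu=\sum_{j} c_j\delta_{x_j}$ on $\mathbb R$, its Fourier transform is $\mathcal F[\nu](\omega)=\sum_j c_j e^{i x_j\omega}$, $\omega\in\mathbb R$. Here $\Omega>0$ is the cutoff frequency, $\sigma>0$ the noise level and $m_{\min}>0$ a prescribed minimal amplitude. *)

theory Defs
  imports "HOL-Analysis.Analysis"
begin

definition discrete_FT :: "nat \<Rightarrow> (nat \<Rightarrow> real) \<Rightarrow> (nat \<Rightarrow> real) \<Rightarrow> real \<Rightarrow> complex" where
  "discrete_FT n c x \<omega> = (\<Sum>j<n. complex_of_real (c j) * exp (\<i> * complex_of_real (x j * \<omega>)))"

end

theory Submission
  imports Defs
begin

text \<open>With \<open>N = 2n - 1\<close> and \<open>m = m_min\<close> take \<open>a k = m (N choose 2k)\<close> and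
  \<open>ahat k = m (N choose 2k+1)\<close>. Then \<open>\<mu>hat - \<mu>\<close> is \<open>-m\<close> times the \<open>N\<close>-th finite
  difference \<open>\<Sum>j. (-1)^j (N choose j) \<delta>(x0 + j \<tau>)\<close> of a point mass, whose Fourier transform
  is \<open>exp(i x0 \<omega>) (1 - exp(i \<tau> \<omega>))^N\<close>. As \<open>|1 - exp(i s)| \<le> |s|\<close>, its modulus on
  \<open>[-\<Omega>, \<Omega>]\<close> is at most \<open>m (\<tau> \<Omega>)^N = \<sigma> exp(-N) < \<sigma>\<close>, while the smallest weight of
  \<open>\<mu>\<close> is \<open>a 0 = m\<close>.\<close>

lemma sum_lessThan_double_even_odd:
  fixes f :: "nat \<Rightarrow> 'a::comm_monoid_add"
  shows "(\<Sum>i<2 * n. f i) = (\<Sum>k<n. f (2 * k)) + (\<Sum>k<n. f (2 * k + 1))"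
  by (induction n) (simp_all add: algebra_simps)

lemma one_minus_power_binomial:
  fixes z :: "'a::comm_ring_1"
  shows "(1 - z) ^ N = (\<Sum>j\<le>N. of_nat (N choose j) * (- z) ^ j)"
  using binomial_ring[of "- z" 1 N] by simp

lemma norm_one_minus_exp_ii_le: "cmod (1 - exp (\<i> * of_real s)) \<le> \<bar>s\<bar>"
proof -
  have "cmod (1 - exp (\<i> * of_real s)) = 2 * \<bar>sin (s / 2)\<bar>"
    by (metis norm_minus_commute dist_exp_i_1)
  also have "\<dots> \<le> \<bar>s\<bar>"
    using abs_sin_x_le_abs_x[of "s / 2"] by simp
  finally show ?thesis .
qed

lemma discrete_FT_progression:
  "discrete_FT n c (\<lambda>k. x\<^sub>0 + real (g k) * t) \<omega> =
     exp (\<i> * of_real (x\<^sub>0 * \<omega>)) * (\<Sum>k<n. of_real (c k) * exp (\<i> * of_real (t * \<omega>)) ^ g k)"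
proof -
  have exp_progression: "exp (\<i> * of_real ((x\<^sub>0 + real j * t) * \<omega>)) =
          exp (\<i> * of_real (x\<^sub>0 * \<omega>)) * exp (\<i> * of_real (t * \<omega>)) ^ j" for j
  proof -
    have "\<i> * of_real ((x\<^sub>0 + real j * t) * \<omega>) = \<i> * of_real (x\<^sub>0 * \<omega>) + of_nat j * (\<i> * of_real (t * \<omega>))"
      by (simp add: algebra_simps)
    then show ?thesis by (simp add: exp_add exp_of_nat_mult)
  qed
  show ?thesis
    unfolding discrete_FT_def sum_distrib_left
    by (intro sum.cong refl) (subst exp_progression, simp only: mult_ac)
qed

lemma discrete_FT_binomial_odd_minus_even:
  fixes m x\<^sub>0 t \<omega> :: real
  assumes "n \<ge> 1"
  shows "discrete_FT n (\<lambda>k. m * real ((2 * n - 1) choose (2 * k + 1))) (\<lambda>k. x\<^sub>0 + real (2 * k + 1) * t) \<omega>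
       - discrete_FT n (\<lambda>k. m * real ((2 * n - 1) choose (2 * k))) (\<lambda>k. x\<^sub>0 + real (2 * k) * t) \<omega>
       = - (of_real m * exp (\<i> * of_real (x\<^sub>0 * \<omega>)) * (1 - exp (\<i> * of_real (t * \<omega>))) ^ (2 * n - 1))"
proof -
  define N where "N = 2 * n - 1"
  define E where "E = exp (\<i> * of_real (x\<^sub>0 * \<omega>))"
  define z where "z = exp (\<i> * of_real (t * \<omega>))"
  define f where "f j = of_real m * E * (of_nat (N choose j) * (- z) ^ j)" for j
  have odd_power_minus: "(- z) ^ (2 * k + 1) = - (z ^ (2 * k + 1))" for k
    by (rule power_minus_odd) simp
  have even: "discrete_FT n (\<lambda>k. m * real (N choose (2 * k))) (\<lambda>k. x\<^sub>0 + real (2 * k) * t) \<omega>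
      = (\<Sum>k<n. f (2 * k))"
    unfolding discrete_FT_progression E_def[symmetric] z_def[symmetric] f_def sum_distrib_left
    by (intro sum.cong refl)
      (simp only: Power.power_minus_even of_real_mult of_real_of_nat_eq, simp only: mult_ac)
  have odd: "discrete_FT n (\<lambda>k. m * real (N choose (2 * k + 1))) (\<lambda>k. x\<^sub>0 + real (2 * k + 1) * t) \<omega>
      = - (\<Sum>k<n. f (2 * k + 1))"
    unfolding discrete_FT_progression E_def[symmetric] z_def[symmetric] f_def sum_distrib_left
      sum_negf[symmetric]
    by (intro sum.cong refl)
      (simp only: odd_power_minus of_real_mult of_real_of_nat_eq mult_minus_right minus_minus,
       simp only: mult_ac)
  have "of_real m * E * (1 - z) ^ N = (\<Sum>j<2 * n. f j)"
    unfolding f_def one_minus_power_binomial sum_distrib_left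
    using assms by (simp add: N_def lessThan_Suc_atMost[symmetric])
  also have "\<dots> = (\<Sum>k<n. f (2 * k)) + (\<Sum>k<n. f (2 * k + 1))"
    by (rule sum_lessThan_double_even_odd)
  finally show ?thesis
    unfolding N_def[symmetric] E_def[symmetric] z_def[symmetric] even odd
    by (simp add: algebra_simps)
qed

lemma norm_discrete_FT_binomial_odd_minus_even_le:
  fixes m x\<^sub>0 t \<omega> \<Omega> :: real
  assumes "n \<ge> 1" and "m \<ge> 0" and "t \<ge> 0" and "\<bar>\<omega>\<bar> \<le> \<Omega>"
  shows "cmod (discrete_FT n (\<lambda>k. m * real ((2 * n - 1) choose (2 * k + 1))) (\<lambda>k. x\<^sub>0 + real (2 * k + 1) * t) \<omega>
             - discrete_FT n (\<lambda>k. m * real ((2 * n - 1) choose (2 * k))) (\<lambda>k. x\<^sub>0 + real (2 * k) * t) \<omega>)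
         \<le> m * (t * \<Omega>) ^ (2 * n - 1)"
proof -
  have "cmod (1 - exp (\<i> * of_real (t * \<omega>))) \<le> t * \<Omega>"
    using norm_one_minus_exp_ii_le[of "t * \<omega>"] assms(3,4)
    by (simp add: abs_mult mult_left_mono order_trans)
  then show ?thesis
    unfolding discrete_FT_binomial_odd_minus_even[OF assms(1)]
    using assms(2) by (simp add: norm_mult norm_power mult_left_mono power_mono)
qed

lemma power_exp_neg_one_times_root:
  fixes c :: real
  assumes "c > 0" and "N > 0"
  shows "(exp (-1) * c powr (1 / real N)) ^ N = exp (- real N) * c"
proof -
  have "(c powr (1 / real N)) ^ N = c"
    using assms by (simp add: powr_realpow[symmetric] powr_powr)
  moreover have "exp (-1) ^ N = exp (- real N)"
    by (simp add: exp_of_nat_mult[symmetric])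
  ultimately show ?thesis
    by (simp add: power_mult_distrib)
qed

lemma Min_binomial_even_weights:
  fixes m :: real
  assumes "n \<ge> 1" and "m \<ge> 0"
  shows "(MIN j\<in>{..<n}. \<bar>m * real ((2 * n - 1) choose (2 * j))\<bar>) = m"
proof (rule antisym)
  have "(MIN j\<in>{..<n}. \<bar>m * real ((2 * n - 1) choose (2 * j))\<bar>) \<le> \<bar>m * real ((2 * n - 1) choose (2 * 0))\<bar>"
    using assms(1) by (intro Min_le finite_imageI image_eqI[where x = 0]) auto
  then show "(MIN j\<in>{..<n}. \<bar>m * real ((2 * n - 1) choose (2 * j))\<bar>) \<le> m"
    using assms(2) by simp
  have "\<forall>j\<in>{..<n}. m \<le> \<bar>m * real ((2 * n - 1) choose (2 * j))\<bar>"
  proof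
    fix j assume "j \<in> {..<n}"
    have "1 \<le> real ((2 * n - 1) choose (2 * j))"
      using \<open>j \<in> {..<n}\<close> by (simp add: Suc_leI)
    then show "m \<le> \<bar>m * real ((2 * n - 1) choose (2 * j))\<bar>"
      using assms(2) mult_left_mono[of 1 _ m] by (simp add: abs_mult)
  qed
  moreover have "0 \<in> {..<n}"
    using assms(1) by simp
  ultimately show "m \<le> (MIN j\<in>{..<n}. \<bar>m * real ((2 * n - 1) choose (2 * j))\<bar>)"
    by (subst Min_ge_iff) auto
qed

theorem theorem2p4:
  fixes \<Omega> \<sigma> m_min :: real and n :: nat
  assumes "\<Omega> > 0" and "0 < \<sigma>" and "\<sigma> \<le> m_min" and "n \<ge> 2"
  defines "\<tau> \<equiv> exp (-1) / \<Omega> * (\<sigma> / m_min) powr (1 / (2 * real n - 1))"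
  shows "\<exists>a ahat :: nat \<Rightarrow> real.
           (\<forall>j<n. a j > 0) \<and> (\<forall>j<n. ahat j > 0) \<and>
           (SUP \<omega>\<in>{-\<Omega>..\<Omega>}.
              cmod (discrete_FT n ahat (\<lambda>k. -(real n - 3/2) * \<tau> + 2 * real k * \<tau>) \<omega>
                  - discrete_FT n a (\<lambda>k. -(real n - 1/2) * \<tau> + 2 * real k * \<tau>) \<omega>)) < \<sigma> \<and>
           (MIN j\<in>{..<n}. \<bar>a j\<bar>) = m_min"
proof -
  define N where "N = 2 * n - 1"
  define a where "a k = m_min * real (N choose (2 * k))" for k
  define ahat where "ahat k = m_min * real (N choose (2 * k + 1))" for k
  define x\<^sub>0 where "x\<^sub>0 = -(real n - 1/2) * \<tau>"
  have N: "N > 0" "real N = 2 * real n - 1"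
    using assms(4) by (auto simp: N_def)
  have m_min_pos: "m_min > 0"
    using assms(2,3) by linarith
  have \<tau>_pos: "\<tau> > 0"
    unfolding \<tau>_def using assms(1,2) m_min_pos by simp
  have points: "(\<lambda>k. -(real n - 3/2) * \<tau> + 2 * real k * \<tau>) = (\<lambda>k. x\<^sub>0 + real (2 * k + 1) * \<tau>)"
      "(\<lambda>k. -(real n - 1/2) * \<tau> + 2 * real k * \<tau>) = (\<lambda>k. x\<^sub>0 + real (2 * k) * \<tau>)"
    unfolding x\<^sub>0_def by (simp_all add: fun_eq_iff algebra_simps)
  have "m_min * (\<tau> * \<Omega>) ^ N = \<sigma> * exp (- real N)"
    using power_exp_neg_one_times_root[of "\<sigma> / m_min" N] assms(1,2) m_min_pos N
    by (simp add: \<tau>_def)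
  then have "cmod (discrete_FT n ahat (\<lambda>k. x\<^sub>0 + real (2 * k + 1) * \<tau>) \<omega>
                 - discrete_FT n a (\<lambda>k. x\<^sub>0 + real (2 * k) * \<tau>) \<omega>) \<le> \<sigma> * exp (- real N)"
    if "\<omega> \<in> {-\<Omega>..\<Omega>}" for \<omega>
    using norm_discrete_FT_binomial_odd_minus_even_le[of n m_min \<tau> \<omega> \<Omega> x\<^sub>0] that assms(4) m_min_pos \<tau>_pos
    unfolding a_def ahat_def N_def by auto
  then have "(SUP \<omega>\<in>{-\<Omega>..\<Omega>}. cmod (discrete_FT n ahat (\<lambda>k. x\<^sub>0 + real (2 * k + 1) * \<tau>) \<omega>
                 - discrete_FT n a (\<lambda>k. x\<^sub>0 + real (2 * k) * \<tau>) \<omega>)) \<le> \<sigma> * exp (- real N)"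
    using assms(1) by (intro cSUP_least) auto
  also have "\<sigma> * exp (- real N) < \<sigma>"
    using assms(2) N by simp
  finally show ?thesis
    unfolding points
    using Min_binomial_even_weights[of n m_min] assms(4) m_min_pos
    by (intro exI[of _ a] exI[of _ ahat] conjI) (auto simp: a_def ahat_def N_def)
qed

end
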